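(* Let $R$ be a local ring with maximal ideal $\mathfrak{m}$, complete and separated with respect to the $\mathfrak{m}$-adic topology, $\sigma$ a ring endomorphism of $R$ with $\sigma(\mathfrak{m})\subseteq\mathfrak{m}$, and $\delta$ a $\sigma$-derivation with $\delta(R)\subseteq\mathfrak{m}$ and $\delta(\mathfrak{m})\subseteq\mathfrak{m}^2$. Let $A=R[[X;\sigma,\delta]]$. An element $f=\sum f_iX^i\in A$ is a unit in $A$ if and only if its constant term $f_0$ is a unit in $R$. In particular $A$ is a local ring.
   Context: A $\sigma$-derivation is an additive map with $\delta(rs)=\delta(r)s+\sigma(r)\delta(s)$. $R[[X;\sigma,\delta]]$ consists of formal series $\sum_{n\ge0}r_nX^n$ with multiplication determined by $Xr=\sigma(r)X+\delta(r)$. A local ring is one whose non-units form a proper two-sided ideal. *)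

theory Defs
  imports Main
begin

definition unit_wrt :: "('b \<Rightarrow> 'b \<Rightarrow> 'b) \<Rightarrow> 'b \<Rightarrow> 'b \<Rightarrow> bool" where
  "unit_wrt mul one x \<longleftrightarrow> (\<exists>y. mul x y = one \<and> mul y x = one)"

definition two_sided_ideal_wrt ::
  "('b \<Rightarrow> 'b \<Rightarrow> 'b) \<Rightarrow> ('b \<Rightarrow> 'b) \<Rightarrow> 'b \<Rightarrow> ('b \<Rightarrow> 'b \<Rightarrow> 'b) \<Rightarrow> 'b set \<Rightarrow> bool" where
  "two_sided_ideal_wrt add neg zero mul I \<longleftrightarrow>
     zero \<in> I \<and> (\<forall>x\<in>I. \<forall>y\<in>I. add x y \<in> I) \<and> (\<forall>x\<in>I. neg x \<in> I) \<and>
     (\<forall>x\<in>I. \<forall>r. mul r x \<in> I \<and> mul x r \<in> I)"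

definition local_ring_wrt ::
  "('b \<Rightarrow> 'b \<Rightarrow> 'b) \<Rightarrow> ('b \<Rightarrow> 'b) \<Rightarrow> 'b \<Rightarrow> ('b \<Rightarrow> 'b \<Rightarrow> 'b) \<Rightarrow> 'b \<Rightarrow> bool" where
  "local_ring_wrt add neg zero mul one \<longleftrightarrow>
     two_sided_ideal_wrt add neg zero mul {x. \<not> unit_wrt mul one x} \<and>
     {x. \<not> unit_wrt mul one x} \<noteq> UNIV"

definition nonunits :: "'a::ring_1 set" where
  "nonunits = {x. \<not> unit_wrt (*) 1 x}"

inductive_set ideal_prod :: "'a::ring_1 set \<Rightarrow> 'a set \<Rightarrow> 'a set" for M N where
  zero: "0 \<in> ideal_prod M N"
| prod: "x \<in> M \<Longrightarrow> y \<in> N \<Longrightarrow> x * y \<in> ideal_prod M N"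
| diff: "a \<in> ideal_prod M N \<Longrightarrow> b \<in> ideal_prod M N \<Longrightarrow> a - b \<in> ideal_prod M N"

fun ideal_pow :: "'a::ring_1 set \<Rightarrow> nat \<Rightarrow> 'a set" where
  "ideal_pow M 0 = UNIV"
| "ideal_pow M (Suc n) = ideal_prod M (ideal_pow M n)"

definition adic_tendsto :: "'a::ring_1 set \<Rightarrow> (nat \<Rightarrow> 'a) \<Rightarrow> 'a \<Rightarrow> bool" where
  "adic_tendsto M S a \<longleftrightarrow> (\<forall>k. \<exists>N. \<forall>n\<ge>N. S n - a \<in> ideal_pow M k)"

definition adic_cauchy :: "'a::ring_1 set \<Rightarrow> (nat \<Rightarrow> 'a) \<Rightarrow> bool" where
  "adic_cauchy M S \<longleftrightarrow> (\<forall>k. \<exists>N. \<forall>n\<ge>N. \<forall>p\<ge>N. S n - S p \<in> ideal_pow M k)"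

definition adic_separated :: "'a::ring_1 set \<Rightarrow> bool" where
  "adic_separated M \<longleftrightarrow> (\<Inter>k. ideal_pow M k) = {0}"

definition adic_complete :: "'a::ring_1 set \<Rightarrow> bool" where
  "adic_complete M \<longleftrightarrow> (\<forall>S. adic_cauchy M S \<longrightarrow> (\<exists>a. adic_tendsto M S a))"

definition adic_lim :: "'a::ring_1 set \<Rightarrow> (nat \<Rightarrow> 'a) \<Rightarrow> 'a" where
  "adic_lim M S = (THE a. adic_tendsto M S a)"

definition ring_endo :: "('a::ring_1 \<Rightarrow> 'a) \<Rightarrow> bool" where
  "ring_endo \<sigma> \<longleftrightarrow> (\<forall>a b. \<sigma> (a + b) = \<sigma> a + \<sigma> b) \<and> (\<forall>a b. \<sigma> (a * b) = \<sigma> a * \<sigma> b) \<and> \<sigma> 1 = 1"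

definition sigma_derivation :: "('a::ring_1 \<Rightarrow> 'a) \<Rightarrow> ('a \<Rightarrow> 'a) \<Rightarrow> bool" where
  "sigma_derivation \<sigma> \<delta> \<longleftrightarrow> (\<forall>a b. \<delta> (a + b) = \<delta> a + \<delta> b) \<and>
     (\<forall>r s. \<delta> (r * s) = \<delta> r * s + \<sigma> r * \<delta> s)"

(* X^n r = sum_j skew_coeff sigma delta n j r * X^j, from X r = sigma(r) X + delta(r) *)
fun skew_coeff :: "('a::ring_1 \<Rightarrow> 'a) \<Rightarrow> ('a \<Rightarrow> 'a) \<Rightarrow> nat \<Rightarrow> nat \<Rightarrow> 'a \<Rightarrow> 'a" where
  "skew_coeff \<sigma> \<delta> 0 j r = (if j = 0 then r else 0)"
| "skew_coeff \<sigma> \<delta> (Suc n) j r =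
     (if j = 0 then 0 else \<sigma> (skew_coeff \<sigma> \<delta> n (j - 1) r)) + \<delta> (skew_coeff \<sigma> \<delta> n j r)"

(* Multiplication in R[[X;sigma,delta]] (series = coefficient functions nat => R):
   (sum_i f_i X^i)(sum_j g_j X^j) = sum_{i,j,l} f_i * skew_coeff i l (g_j) X^(l+j);
   the coefficient of X^k is the M-adic limit of its partial sums over i. *)
definition skew_mult :: "('a::ring_1 \<Rightarrow> 'a) \<Rightarrow> ('a \<Rightarrow> 'a) \<Rightarrow> 'a set \<Rightarrow>
    (nat \<Rightarrow> 'a) \<Rightarrow> (nat \<Rightarrow> 'a) \<Rightarrow> nat \<Rightarrow> 'a" where
  "skew_mult \<sigma> \<delta> M f g k =
     adic_lim M (\<lambda>N. \<Sum>j\<le>k. \<Sum>i<N. f i * skew_coeff \<sigma> \<delta> i (k - j) (g j))"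

definition skew_one :: "nat \<Rightarrow> 'a::ring_1" where
  "skew_one k = (if k = 0 then 1 else 0)"

definition skew_add :: "(nat \<Rightarrow> 'a::ring_1) \<Rightarrow> (nat \<Rightarrow> 'a) \<Rightarrow> nat \<Rightarrow> 'a" where
  "skew_add f g k = f k + g k"

definition skew_neg :: "(nat \<Rightarrow> 'a::ring_1) \<Rightarrow> nat \<Rightarrow> 'a" where
  "skew_neg f k = - f k"

end

theory Submission
  imports Defs "HOL.Modules"
begin

(* Commuting X^i past a coefficient r produces the terms skew_coeff i l r X^l, and skew_coeff i l
   maps M^n into M^(n+i-l) because every application of delta raises the M-adic order by one.
   Hence each coefficient of a product is an M-adically convergent sum, and the series whose
   i-th coefficient lies in M^(w-i) form a multiplicative filtration along which multiplication
   is continuous in each factor. Associativity therefore reduces to monomials, where it is the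
   composition rule for skew_coeff. If f_0 has inverse u, then u f = 1 - h with h in filtration
   level 1, and the geometric series of h inverts u f on both sides. Conversely the constant term
   is multiplicative modulo M, so the non-units are exactly the series with f_0 in M. *)

lemma unit_wrt_mult:
  assumes assoc: "\<And>x y z. mul (mul x y) z = mul x (mul y z)"
    and one_left: "\<And>x. mul one x = x" and one_right: "\<And>x. mul x one = x"
    and "unit_wrt mul one x" and "unit_wrt mul one y"
  shows "unit_wrt mul one (mul x y)"
proof -
  obtain x' y' where x': "mul x x' = one" "mul x' x = one" and y': "mul y y' = one" "mul y' y = one"
    using assms(4,5) unfolding unit_wrt_def by blast
  have "mul (mul x y) (mul y' x') = one" by (metis assoc one_left x'(1) y'(1))
  moreover have "mul (mul y' x') (mul x y) = one" by (metis assoc one_left x'(2) y'(2))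
  ultimately show ?thesis unfolding unit_wrt_def by blast
qed

lemma sum_atMost_shift_lower:
  fixes g :: "nat \<Rightarrow> 'b::comm_monoid_add"
  assumes "\<And>x. x < l \<Longrightarrow> g x = 0"
  shows "(\<Sum>x\<le>l + s. g x) = (\<Sum>u\<le>s. g (u + l))"
proof -
  have "(\<Sum>x\<le>l + s. g x) = (\<Sum>x=0 + l..s + l. g x)"
    using assms by (intro sum.mono_neutral_right) auto
  also have "\<dots> = (\<Sum>u\<le>s. g (u + l))"
    by (simp only: sum.shift_bounds_cl_nat_ivl atMost_atLeast0)
  finally show ?thesis .
qed

lemma finite_nat_diff_less: "finite {i::nat. i - k < N}"
  by (rule finite_subset[of _ "{..<N + k}"]) auto

locale adic_ideal =
  fixes M :: "'a::ring_1 set"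
  assumes ideal: "two_sided_ideal_wrt (+) uminus 0 (*) M"
begin

lemma ideal_zero: "0 \<in> M"
  and ideal_add: "x \<in> M \<Longrightarrow> y \<in> M \<Longrightarrow> x + y \<in> M"
  and ideal_neg: "x \<in> M \<Longrightarrow> - x \<in> M"
  and ideal_left: "x \<in> M \<Longrightarrow> r * x \<in> M"
  and ideal_right: "x \<in> M \<Longrightarrow> x * r \<in> M"
  using ideal unfolding two_sided_ideal_wrt_def by blast+

lemma ideal_diff: "x \<in> M \<Longrightarrow> y \<in> M \<Longrightarrow> x - y \<in> M"
  using ideal_add[of x "- y"] ideal_neg[of y] by simp

lemma ideal_pow_zero: "0 \<in> ideal_pow M n"
  by (cases n) (auto intro: ideal_prod.zero)

lemma ideal_pow_diff: "x \<in> ideal_pow M n \<Longrightarrow> y \<in> ideal_pow M n \<Longrightarrow> x - y \<in> ideal_pow M n"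
  by (cases n) (auto intro: ideal_prod.diff)

lemma ideal_pow_neg: "x \<in> ideal_pow M n \<Longrightarrow> - x \<in> ideal_pow M n"
  using ideal_pow_diff[OF ideal_pow_zero, of x n] by simp

lemma ideal_pow_add: "x \<in> ideal_pow M n \<Longrightarrow> y \<in> ideal_pow M n \<Longrightarrow> x + y \<in> ideal_pow M n"
  using ideal_pow_diff[of x n "- y"] ideal_pow_neg[of y n] by simp

lemma ideal_pow_sum:
  "finite F \<Longrightarrow> (\<And>i. i \<in> F \<Longrightarrow> a i \<in> ideal_pow M n) \<Longrightarrow> sum a F \<in> ideal_pow M n"
  by (induction F rule: finite_induct) (auto intro: ideal_pow_zero ideal_pow_add)

lemma ideal_pow_left: "x \<in> ideal_pow M n \<Longrightarrow> r * x \<in> ideal_pow M n"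
proof (induction n arbitrary: x)
  case (Suc n)
  from Suc.prems have "x \<in> ideal_prod M (ideal_pow M n)" by simp
  then have "r * x \<in> ideal_prod M (ideal_pow M n)"
  proof (induction rule: ideal_prod.induct)
    case (prod x y)
    then show ?case using ideal_prod.prod[OF ideal_left[OF prod(1)]] by (simp add: mult.assoc)
  qed (auto intro: ideal_prod.intros simp: right_diff_distrib)
  then show ?case by simp
qed simp

lemma ideal_pow_mult: "x \<in> ideal_pow M a \<Longrightarrow> y \<in> ideal_pow M b \<Longrightarrow> x * y \<in> ideal_pow M (a + b)"
proof (induction a arbitrary: x)
  case 0
  then show ?case using ideal_pow_left by simp
next
  case (Suc a)
  from Suc.prems(1) have "x \<in> ideal_prod M (ideal_pow M a)" by simp
  then have "x * y \<in> ideal_prod M (ideal_pow M (a + b))"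
  proof (induction rule: ideal_prod.induct)
    case (prod u v)
    then show ?case using ideal_prod.prod[OF prod(1) Suc.IH[OF prod(2) Suc.prems(2)]]
      by (simp add: mult.assoc)
  qed (auto intro: ideal_prod.intros simp: left_diff_distrib)
  then show ?case by simp
qed

lemma ideal_pow_right: "x \<in> ideal_pow M n \<Longrightarrow> x * r \<in> ideal_pow M n"
  using ideal_pow_mult[of x n r 0] by simp

lemma ideal_pow_Suc_subset: "ideal_pow M (Suc n) \<subseteq> ideal_pow M n"
proof (induction n)
  case (Suc n)
  show ?case
  proof
    fix x assume "x \<in> ideal_pow M (Suc (Suc n))"
    then have "x \<in> ideal_prod M (ideal_pow M (Suc n))" by simp
    then have "x \<in> ideal_prod M (ideal_pow M n)"
      by (induction rule: ideal_prod.induct) (use Suc.IH in \<open>auto intro: ideal_prod.intros\<close>)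
    then show "x \<in> ideal_pow M (Suc n)" by simp
  qed
qed simp

lemma ideal_pow_antimono: "a \<le> b \<Longrightarrow> ideal_pow M b \<subseteq> ideal_pow M a"
  by (rule lift_Suc_antimono_le[of "ideal_pow M"]) (use ideal_pow_Suc_subset in auto)

lemma ideal_pow_le: "x \<in> ideal_pow M b \<Longrightarrow> a \<le> b \<Longrightarrow> x \<in> ideal_pow M a"
  using ideal_pow_antimono by blast

lemma ideal_pow_one: "ideal_pow M 1 = M"
proof
  show "ideal_pow M 1 \<subseteq> M"
  proof
    fix x assume "x \<in> ideal_pow M 1"
    then have "x \<in> ideal_prod M UNIV" by simp
    then show "x \<in> M"
      by (induction rule: ideal_prod.induct) (auto intro: ideal_zero ideal_right ideal_diff)
  qed
  show "M \<subseteq> ideal_pow M 1"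
    using ideal_prod.prod[of _ M 1 UNIV] by auto
qed

end

locale complete_adic_ideal = adic_ideal +
  assumes complete: "adic_complete M" and separated: "adic_separated M"
begin

lemma eq_if_diff_in_ideal_pows:
  assumes "\<And>k. x - y \<in> ideal_pow M k"
  shows "x = y"
proof -
  have "x - y \<in> (\<Inter>k. ideal_pow M k)" using assms by blast
  then show ?thesis using separated unfolding adic_separated_def by simp
qed

lemma adic_tendsto_unique: "adic_tendsto M X s \<Longrightarrow> adic_tendsto M X t \<Longrightarrow> s = t"
proof (rule eq_if_diff_in_ideal_pows)
  fix k assume "adic_tendsto M X s" "adic_tendsto M X t"
  then obtain N1 N2 where "\<forall>n\<ge>N1. X n - s \<in> ideal_pow M k" "\<forall>n\<ge>N2. X n - t \<in> ideal_pow M k"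
    unfolding adic_tendsto_def by meson
  then have "X (max N1 N2) - t \<in> ideal_pow M k" "X (max N1 N2) - s \<in> ideal_pow M k"
    by simp_all
  then have "(X (max N1 N2) - t) - (X (max N1 N2) - s) \<in> ideal_pow M k"
    by (rule ideal_pow_diff)
  then show "s - t \<in> ideal_pow M k" by simp
qed

(* For every k an adically summable family has only finitely many terms outside M^k, and its sum
   is the element congruent to their sum modulo M^k; no order on the index set is involved. *)
definition large_terms :: "('i \<Rightarrow> 'a) \<Rightarrow> nat \<Rightarrow> 'i set" where
  "large_terms a k = {i. a i \<notin> ideal_pow M k}"

definition adic_summable :: "('i \<Rightarrow> 'a) \<Rightarrow> bool" where
  "adic_summable a \<longleftrightarrow> (\<forall>k. finite (large_terms a k))"

definition adic_sum :: "('i \<Rightarrow> 'a) \<Rightarrow> 'a" where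
  "adic_sum a = (THE s. \<forall>k. s - sum a (large_terms a k) \<in> ideal_pow M k)"

lemma large_terms_mono: "k \<le> n \<Longrightarrow> large_terms a k \<subseteq> large_terms a n"
  unfolding large_terms_def using ideal_pow_antimono by blast

lemma sum_superset_large_terms:
  assumes "finite F" and "large_terms a k \<subseteq> F"
  shows "sum a F - sum a (large_terms a k) \<in> ideal_pow M k"
proof -
  have "sum a F = sum a (large_terms a k) + sum a (F - large_terms a k)"
    using assms by (metis add.commute sum.subset_diff)
  moreover have "sum a (F - large_terms a k) \<in> ideal_pow M k"
    using assms(1) by (intro ideal_pow_sum) (auto simp: large_terms_def)
  ultimately show ?thesis by simp
qed

lemma adic_sum_exists:
  assumes "adic_summable a"
  shows "\<exists>s. \<forall>k. s - sum a (large_terms a k) \<in> ideal_pow M k"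
proof -
  define x where "x n = sum a (large_terms a n)" for n
  have step: "x n - x k \<in> ideal_pow M k" if "k \<le> n" for n k
    unfolding x_def using assms large_terms_mono[OF that, of a]
    by (intro sum_superset_large_terms) (auto simp: adic_summable_def)
  have "x n - x p \<in> ideal_pow M k" if "k \<le> n" "k \<le> p" for n p k
    using ideal_pow_diff[OF step[OF that(1)] step[OF that(2)]] by simp
  then have "adic_cauchy M x"
    unfolding adic_cauchy_def by blast
  then obtain s where s: "adic_tendsto M x s"
    using complete unfolding adic_complete_def by blast
  have "s - x k \<in> ideal_pow M k" for k
  proof -
    obtain N where "\<forall>n\<ge>N. x n - s \<in> ideal_pow M k"
      using s unfolding adic_tendsto_def by blast
    then have "x (max N k) - s \<in> ideal_pow M k" by simp
    moreover have "x (max N k) - x k \<in> ideal_pow M k" by (rule step) simp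
    ultimately show ?thesis using ideal_pow_diff[of "x (max N k) - x k" k "x (max N k) - s"] by simp
  qed
  then show ?thesis unfolding x_def by blast
qed

lemma adic_sum_large_terms:
  assumes "adic_summable a"
  shows "adic_sum a - sum a (large_terms a k) \<in> ideal_pow M k"
proof -
  obtain s where s: "\<forall>k. s - sum a (large_terms a k) \<in> ideal_pow M k"
    using adic_sum_exists[OF assms] by blast
  have unique: "t = s" if "\<forall>k. t - sum a (large_terms a k) \<in> ideal_pow M k" for t
  proof (rule eq_if_diff_in_ideal_pows)
    fix k show "t - s \<in> ideal_pow M k"
      using ideal_pow_diff[OF that[rule_format, of k] s[rule_format, of k]] by simp
  qed
  have "adic_sum a = s"
    unfolding adic_sum_def using s unique by (rule the_equality)
  then show ?thesis using s by simp
qed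

lemma adic_sum_approx:
  assumes "adic_summable a" and "finite F" and "large_terms a k \<subseteq> F"
  shows "adic_sum a - sum a F \<in> ideal_pow M k"
  using ideal_pow_diff[OF adic_sum_large_terms[OF assms(1)] sum_superset_large_terms[OF assms(2,3)]]
  by simp

lemma adic_sum_eqI:
  assumes a: "adic_summable a"
    and approx: "\<And>k. \<exists>F. finite F \<and> large_terms a k \<subseteq> F \<and> s - sum a F \<in> ideal_pow M k"
  shows "adic_sum a = s"
proof (rule eq_if_diff_in_ideal_pows)
  fix k
  obtain F where F: "finite F" "large_terms a k \<subseteq> F" "s - sum a F \<in> ideal_pow M k"
    using approx by blast
  show "adic_sum a - s \<in> ideal_pow M k"
    using ideal_pow_diff[OF adic_sum_approx[OF a F(1,2)] F(3)] by simp
qed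

lemma adic_sum_in_ideal_pow:
  assumes "adic_summable a" and "\<And>i. a i \<in> ideal_pow M w"
  shows "adic_sum a \<in> ideal_pow M w"
proof -
  have "large_terms a w = {}" using assms(2) by (auto simp: large_terms_def)
  then show ?thesis using adic_sum_large_terms[OF assms(1), of w] by simp
qed

lemma adic_summable_weighted:
  assumes "\<And>i. a i \<in> ideal_pow M (w i)" and "\<And>N. finite {i. w i < N}"
  shows "adic_summable a"
  unfolding adic_summable_def
proof
  fix k
  have "large_terms a k \<subseteq> {i. w i < k}"
  proof
    fix i assume "i \<in> large_terms a k"
    then show "i \<in> {i. w i < k}"
      using assms(1)[of i] ideal_pow_le[of "a i" "w i" k] by (simp add: large_terms_def) (meson not_le)
  qed
  then show "finite (large_terms a k)" using assms(2) finite_subset by blast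
qed

lemma adic_sum_finite_support:
  assumes F: "finite F" and zero: "\<And>i. i \<notin> F \<Longrightarrow> a i = 0"
  shows "adic_summable a" "adic_sum a = sum a F"
proof -
  have sub: "large_terms a k \<subseteq> F" for k
  proof
    fix i assume "i \<in> large_terms a k"
    then show "i \<in> F" using zero[of i] ideal_pow_zero[of k] by (cases "i \<in> F") (auto simp: large_terms_def)
  qed
  show summable: "adic_summable a"
    unfolding adic_summable_def using sub F finite_subset by blast
  show "adic_sum a = sum a F"
    using F sub ideal_pow_zero by (intro adic_sum_eqI[OF summable] exI[of _ F]) auto
qed

lemma adic_sum_single: "adic_sum (\<lambda>i. if i = n then x else 0) = x"
  using adic_sum_finite_support(2)[of "{n}" "\<lambda>i. if i = n then x else 0"] by simp

lemma adic_sum_additive: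
  assumes a: "adic_summable a" and "additive \<phi>"
    and pres: "\<And>x k. x \<in> ideal_pow M k \<Longrightarrow> \<phi> x \<in> ideal_pow M k"
  shows "adic_summable (\<lambda>i. \<phi> (a i))" "adic_sum (\<lambda>i. \<phi> (a i)) = \<phi> (adic_sum a)"
proof -
  interpret additive \<phi> by fact
  have sub: "large_terms (\<lambda>i. \<phi> (a i)) k \<subseteq> large_terms a k" for k
    using pres unfolding large_terms_def by blast
  show summable: "adic_summable (\<lambda>i. \<phi> (a i))"
    using a sub finite_subset unfolding adic_summable_def by metis
  show "adic_sum (\<lambda>i. \<phi> (a i)) = \<phi> (adic_sum a)"
  proof (rule adic_sum_eqI[OF summable])
    fix k
    have "\<phi> (adic_sum a) - sum (\<lambda>i. \<phi> (a i)) (large_terms a k)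
        = \<phi> (adic_sum a - sum a (large_terms a k))" by (simp add: diff sum)
    also have "\<dots> \<in> ideal_pow M k" using pres adic_sum_large_terms[OF a] by blast
    finally have "\<phi> (adic_sum a) - sum (\<lambda>i. \<phi> (a i)) (large_terms a k) \<in> ideal_pow M k" .
    moreover have "finite (large_terms a k)" using a by (simp add: adic_summable_def)
    ultimately show "\<exists>F. finite F \<and> large_terms (\<lambda>i. \<phi> (a i)) k \<subseteq> F \<and>
        \<phi> (adic_sum a) - sum (\<lambda>i. \<phi> (a i)) F \<in> ideal_pow M k"
      using sub[of k] by blast
  qed
qed

lemma adic_sum_add:
  assumes a: "adic_summable a" and b: "adic_summable b"
  shows "adic_summable (\<lambda>i. a i + b i)" "adic_sum (\<lambda>i. a i + b i) = adic_sum a + adic_sum b"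
proof -
  have sub: "large_terms (\<lambda>i. a i + b i) k \<subseteq> large_terms a k \<union> large_terms b k" for k
    using ideal_pow_add by (auto simp: large_terms_def)
  show summable: "adic_summable (\<lambda>i. a i + b i)"
    using a b sub unfolding adic_summable_def by (meson finite_UnI finite_subset)
  show "adic_sum (\<lambda>i. a i + b i) = adic_sum a + adic_sum b"
  proof (rule adic_sum_eqI[OF summable])
    fix k
    let ?F = "large_terms a k \<union> large_terms b k"
    have fin: "finite ?F" using a b by (auto simp: adic_summable_def)
    have "(adic_sum a - sum a ?F) + (adic_sum b - sum b ?F) \<in> ideal_pow M k"
      using ideal_pow_add adic_sum_approx[OF a fin] adic_sum_approx[OF b fin] by blast
    then have "adic_sum a + adic_sum b - sum (\<lambda>i. a i + b i) ?F \<in> ideal_pow M k"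
      by (simp add: sum.distrib algebra_simps)
    then show "\<exists>F. finite F \<and> large_terms (\<lambda>i. a i + b i) k \<subseteq> F \<and>
        adic_sum a + adic_sum b - sum (\<lambda>i. a i + b i) F \<in> ideal_pow M k"
      using fin sub[of k] by blast
  qed
qed

lemma adic_sum_diff:
  assumes a: "adic_summable a" and b: "adic_summable b"
  shows "adic_summable (\<lambda>i. a i - b i)" "adic_sum (\<lambda>i. a i - b i) = adic_sum a - adic_sum b"
proof -
  have "additive uminus" by unfold_locales simp
  then have neg: "adic_summable (\<lambda>i. - b i)" "adic_sum (\<lambda>i. - b i) = - adic_sum b"
    using adic_sum_additive[where \<phi> = uminus, OF b _ ideal_pow_neg] by auto
  show "adic_summable (\<lambda>i. a i - b i)" "adic_sum (\<lambda>i. a i - b i) = adic_sum a - adic_sum b"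
    using adic_sum_add[OF a neg(1)] neg(2) by simp_all
qed

lemma adic_sum_sum:
  assumes "finite A" and "\<And>x. x \<in> A \<Longrightarrow> adic_summable (a x)"
  shows "adic_summable (\<lambda>i. \<Sum>x\<in>A. a x i) \<and> adic_sum (\<lambda>i. \<Sum>x\<in>A. a x i) = (\<Sum>x\<in>A. adic_sum (a x))"
  using assms
proof (induction A rule: finite_induct)
  case empty
  then show ?case using adic_sum_finite_support[of "{}" "\<lambda>i. 0"] by simp
next
  case (insert y A)
  then show ?case using adic_sum_add[of "a y" "\<lambda>i. \<Sum>x\<in>A. a x i"] by simp
qed

lemma adic_sum_mult_right:
  assumes "adic_summable a"
  shows "adic_summable (\<lambda>i. a i * c)" "adic_sum (\<lambda>i. a i * c) = adic_sum a * c"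
proof -
  have "additive (\<lambda>x. x * c)" by unfold_locales (simp add: distrib_right)
  then show "adic_summable (\<lambda>i. a i * c)" "adic_sum (\<lambda>i. a i * c) = adic_sum a * c"
    using adic_sum_additive[where \<phi> = "\<lambda>x. x * c", OF assms _ ideal_pow_right] by auto
qed

lemma adic_sum_reindex:
  assumes h: "bij h" and a: "adic_summable a"
  shows "adic_summable (\<lambda>j. a (h j))" "adic_sum (\<lambda>j. a (h j)) = adic_sum a"
proof -
  have large: "large_terms (\<lambda>j. a (h j)) k = h -` large_terms a k" for k
    by (auto simp: large_terms_def)
  show summable: "adic_summable (\<lambda>j. a (h j))"
    using a h unfolding adic_summable_def large by (simp add: bij_is_inj finite_vimageI)
  show "adic_sum (\<lambda>j. a (h j)) = adic_sum a"
  proof (rule adic_sum_eqI[OF summable])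
    fix k
    let ?L = "large_terms a k"
    have "h ` (h -` ?L) = ?L" using bij_is_surj[OF h] by simp
    moreover have "inj_on h (h -` ?L)" using bij_is_inj[OF h] by (rule inj_on_subset) simp
    ultimately have "sum (\<lambda>j. a (h j)) (h -` ?L) = sum a ?L"
      using sum.reindex[of h "h -` ?L" a] by simp
    moreover have "finite (h -` ?L)" using summable unfolding adic_summable_def large by simp
    ultimately show "\<exists>F. finite F \<and> large_terms (\<lambda>j. a (h j)) k \<subseteq> F \<and>
        adic_sum a - sum (\<lambda>j. a (h j)) F \<in> ideal_pow M k"
      using adic_sum_large_terms[OF a, of k] large by auto
  qed
qed

lemma adic_sum_fubini:
  fixes a :: "'i \<times> 'j \<Rightarrow> 'a"
  assumes a: "adic_summable a"
  shows "\<And>i. adic_summable (\<lambda>j. a (i, j))" "adic_summable (\<lambda>i. adic_sum (\<lambda>j. a (i, j)))"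
    "adic_sum (\<lambda>i. adic_sum (\<lambda>j. a (i, j))) = adic_sum a"
proof -
  have fin: "finite (large_terms a k)" for k using a by (simp add: adic_summable_def)
  have row_large: "large_terms (\<lambda>j. a (i, j)) k \<subseteq> snd ` large_terms a k" for i k
    by (force simp: large_terms_def)
  show row: "adic_summable (\<lambda>j. a (i, j))" for i
    unfolding adic_summable_def using row_large fin by (meson finite_imageI finite_subset)
  let ?b = "\<lambda>i. adic_sum (\<lambda>j. a (i, j))"
  have b_large: "large_terms ?b k \<subseteq> fst ` large_terms a k" for k
  proof
    fix i assume i: "i \<in> large_terms ?b k"
    show "i \<in> fst ` large_terms a k"
    proof (rule ccontr)
      assume "i \<notin> fst ` large_terms a k"
      then have "a (i, j) \<in> ideal_pow M k" for j by (force simp: large_terms_def)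
      then have "?b i \<in> ideal_pow M k" using adic_sum_in_ideal_pow[OF row] by blast
      then show False using i by (simp add: large_terms_def)
    qed
  qed
  show summable: "adic_summable ?b"
    unfolding adic_summable_def using b_large fin by (meson finite_imageI finite_subset)
  show "adic_sum ?b = adic_sum a"
  proof (rule adic_sum_eqI[OF summable])
    fix k
    let ?I = "fst ` large_terms a k" and ?J = "snd ` large_terms a k"
    have fin_I: "finite ?I" and fin_J: "finite ?J" using fin by auto
    have "(\<Sum>i\<in>?I. ?b i - sum (\<lambda>j. a (i, j)) ?J) \<in> ideal_pow M k"
      by (rule ideal_pow_sum[OF fin_I]) (rule adic_sum_approx[OF row fin_J row_large])
    then have rows: "sum ?b ?I - sum a (?I \<times> ?J) \<in> ideal_pow M k"
      by (simp add: sum_subtractf sum.cartesian_product)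
    have "large_terms a k \<subseteq> ?I \<times> ?J" by (intro subsetI mem_Times_iff[THEN iffD2] conjI imageI)
    then have "adic_sum a - sum a (?I \<times> ?J) \<in> ideal_pow M k"
      using adic_sum_approx[OF a finite_cartesian_product[OF fin_I fin_J]] by blast
    from ideal_pow_diff[OF this rows] have "adic_sum a - sum ?b ?I \<in> ideal_pow M k"
      by simp
    then show "\<exists>F. finite F \<and> large_terms ?b k \<subseteq> F \<and> adic_sum a - sum ?b F \<in> ideal_pow M k"
      using fin_I b_large by blast
  qed
qed

lemma adic_sum_swap:
  fixes T :: "'i \<Rightarrow> 'j \<Rightarrow> 'a"
  assumes summable: "adic_summable (\<lambda>p. T (fst p) (snd p))"
  shows "adic_sum (\<lambda>i. adic_sum (\<lambda>j. T i j)) = adic_sum (\<lambda>j. adic_sum (\<lambda>i. T i j))"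
proof -
  have swapped: "adic_summable (\<lambda>q. T (snd q) (fst q))"
    "adic_sum (\<lambda>q. T (snd q) (fst q)) = adic_sum (\<lambda>p. T (fst p) (snd p))"
    using adic_sum_reindex[OF _ summable, of prod.swap] by (simp_all add: bij_swap)
  show ?thesis
    using adic_sum_fubini(3)[OF summable] adic_sum_fubini(3)[OF swapped(1)] swapped(2) by simp
qed

lemma adic_sum_shift:
  fixes a :: "nat \<Rightarrow> 'a"
  assumes a: "adic_summable a"
  shows "adic_summable (\<lambda>n. a (Suc n))" "adic_sum a = a 0 + adic_sum (\<lambda>n. a (Suc n))"
proof -
  have large: "large_terms (\<lambda>n. a (Suc n)) k = Suc -` large_terms a k" for k
    by (auto simp: large_terms_def)
  show summable: "adic_summable (\<lambda>n. a (Suc n))"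
    using a unfolding adic_summable_def large by (simp add: finite_vimageI)
  show "adic_sum a = a 0 + adic_sum (\<lambda>n. a (Suc n))"
  proof (rule adic_sum_eqI[OF a])
    fix k
    let ?L = "large_terms (\<lambda>n. a (Suc n)) k"
    have fin: "finite ?L" using summable by (simp add: adic_summable_def)
    have "large_terms a k \<subseteq> insert 0 (Suc ` ?L)"
      unfolding large by (auto simp: image_iff gr0_conv_Suc)
    moreover have "sum a (insert 0 (Suc ` ?L)) = a 0 + sum (\<lambda>n. a (Suc n)) ?L"
      using fin by (simp add: sum.reindex image_iff)
    ultimately show "\<exists>F. finite F \<and> large_terms a k \<subseteq> F \<and>
        a 0 + adic_sum (\<lambda>n. a (Suc n)) - sum a F \<in> ideal_pow M k"
      using adic_sum_large_terms[OF summable, of k] fin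
      by (intro exI[of _ "insert 0 (Suc ` ?L)"]) simp
  qed
qed

lemma adic_lim_partial_sums:
  fixes a :: "nat \<Rightarrow> 'a"
  assumes a: "adic_summable a"
  shows "adic_lim M (\<lambda>N. sum a {..<N}) = adic_sum a"
  unfolding adic_lim_def
proof (rule the_equality)
  show "adic_tendsto M (\<lambda>N. sum a {..<N}) (adic_sum a)"
    unfolding adic_tendsto_def
  proof
    fix k
    obtain N where N: "large_terms a k \<subseteq> {..<N}"
      using a unfolding adic_summable_def by (meson finite_nat_set_iff_bounded lessThan_iff subsetI)
    have "sum a {..<n} - adic_sum a \<in> ideal_pow M k" if "n \<ge> N" for n
      using ideal_pow_neg[OF adic_sum_approx[OF a finite_lessThan, of k n]] N that by force
    then show "\<exists>N. \<forall>n\<ge>N. sum a {..<n} - adic_sum a \<in> ideal_pow M k" by blast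
  qed
  then show "adic_tendsto M (\<lambda>N. sum a {..<N}) s \<Longrightarrow> s = adic_sum a" for s
    using adic_tendsto_unique by blast
qed

end

locale skew_derivation =
  fixes \<sigma> \<delta> :: "'a::ring_1 \<Rightarrow> 'a"
  assumes endo: "ring_endo \<sigma>" and deriv: "sigma_derivation \<sigma> \<delta>"
begin

sublocale sigma: additive \<sigma>
  using endo by unfold_locales (simp add: ring_endo_def)

sublocale delta: additive \<delta>
  using deriv by unfold_locales (simp add: sigma_derivation_def)

lemma sigma_mult: "\<sigma> (x * y) = \<sigma> x * \<sigma> y"
  and sigma_one: "\<sigma> 1 = 1"
  using endo unfolding ring_endo_def by blast+

lemma delta_mult: "\<delta> (x * y) = \<delta> x * y + \<sigma> x * \<delta> y"
  using deriv unfolding sigma_derivation_def by blast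

lemma delta_one: "\<delta> 1 = 0"
  using delta_mult[of 1 1] sigma_one by simp

abbreviation K :: "nat \<Rightarrow> nat \<Rightarrow> 'a \<Rightarrow> 'a" where
  "K \<equiv> skew_coeff \<sigma> \<delta>"

lemma skew_coeff_additive: "additive (K i l)"
  by unfold_locales (induction i arbitrary: l, auto simp: sigma.add delta.add algebra_simps)

lemmas skew_coeff_zero = additive.zero[OF skew_coeff_additive]
  and skew_coeff_diff = additive.diff[OF skew_coeff_additive]

lemma skew_coeff_eq_0_if_less: "i < l \<Longrightarrow> K i l x = 0"
  by (induction i arbitrary: l) (auto simp: sigma.zero delta.zero)

lemma skew_coeff_one: "K i l 1 = (if l = i then 1 else 0)"
  by (induction i arbitrary: l) (auto simp: sigma.zero delta.zero sigma_one delta_one)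

lemma skew_coeff_mult: "K i l (a * b) = (\<Sum>t\<le>i. K i t a * K t l b)"
proof (induction i arbitrary: l)
  case (Suc i)
  have "(\<Sum>t\<le>Suc i. K (Suc i) t a * K t l b)
      = (\<Sum>t\<le>Suc i. (if t = 0 then 0 else \<sigma> (K i (t - 1) a)) * K t l b)
        + (\<Sum>t\<le>Suc i. \<delta> (K i t a) * K t l b)"
    by (simp add: distrib_right sum.distrib del: sum.atMost_Suc)
  also have "\<dots> = (\<Sum>t\<le>i. \<sigma> (K i t a) * K (Suc t) l b) + (\<Sum>t\<le>i. \<delta> (K i t a) * K t l b)"
    by (subst sum.atMost_Suc_shift) (simp add: skew_coeff_eq_0_if_less delta.zero)
  also have "\<dots> = (if l = 0 then 0 else (\<Sum>t\<le>i. \<sigma> (K i t a) * \<sigma> (K t (l - 1) b))) +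
     ((\<Sum>t\<le>i. \<delta> (K i t a) * K t l b) + (\<Sum>t\<le>i. \<sigma> (K i t a) * \<delta> (K t l b)))"
    by (simp add: distrib_left sum.distrib algebra_simps)
  also have "\<dots> = K (Suc i) l (a * b)"
    by (simp add: Suc.IH sigma.sum delta.sum sigma_mult delta_mult sum.distrib)
  finally show ?case ..
qed simp

lemma skew_coeff_add_exp: "K (a + b) s r = (\<Sum>u\<le>s. K a (s - u) (K b u r))"
proof (induction a arbitrary: s)
  case 0
  have "(\<Sum>u\<le>s. K 0 (s - u) (K b u r)) = (\<Sum>u\<le>s. if u = s then K b u r else 0)"
    by (rule sum.cong) auto
  then show ?case by simp
next
  case (Suc a)
  have shift: "(if s = 0 then 0 else \<Sum>u\<le>s - 1. \<sigma> (K a (s - 1 - u) (K b u r)))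
     = (\<Sum>u\<le>s. if s - u = 0 then 0 else \<sigma> (K a (s - u - 1) (K b u r)))"
  proof (cases s)
    case (Suc s')
    have "(\<Sum>u\<le>s'. \<sigma> (K a (s' - u) (K b u r))) =
        (\<Sum>u\<le>s'. if Suc s' - u = 0 then 0 else \<sigma> (K a (Suc s' - u - 1) (K b u r)))"
      by (rule sum.cong) (auto simp: Suc_diff_le)
    then show ?thesis using Suc by simp
  qed simp
  have "K (Suc a + b) s r = (if s = 0 then 0 else \<sigma> (K (a + b) (s - 1) r)) + \<delta> (K (a + b) s r)"
    by simp
  also have "\<dots> = (if s = 0 then 0 else \<Sum>u\<le>s - 1. \<sigma> (K a (s - 1 - u) (K b u r)))
       + (\<Sum>u\<le>s. \<delta> (K a (s - u) (K b u r)))"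
    by (simp add: Suc.IH sigma.sum delta.sum)
  finally show ?case unfolding shift by (simp add: sum.distrib)
qed

end

locale skew_power_series = complete_adic_ideal M + skew_derivation \<sigma> \<delta>
  for M :: "'a::ring_1 set" and \<sigma> \<delta> :: "'a \<Rightarrow> 'a" +
  assumes sigma_ideal: "\<sigma> ` M \<subseteq> M"
    and delta_range: "range \<delta> \<subseteq> M"
    and delta_ideal: "\<delta> ` M \<subseteq> ideal_pow M 2"
begin

lemma sigma_ideal_pow: "x \<in> ideal_pow M n \<Longrightarrow> \<sigma> x \<in> ideal_pow M n"
proof (induction n arbitrary: x)
  case (Suc n)
  from Suc.prems have "x \<in> ideal_prod M (ideal_pow M n)" by simp
  then have "\<sigma> x \<in> ideal_prod M (ideal_pow M n)"
  proof (induction rule: ideal_prod.induct)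
    case (prod u v)
    then show ?case
      using ideal_prod.prod[of "\<sigma> u" M "\<sigma> v"] sigma_ideal Suc.IH by (auto simp: sigma_mult)
  qed (auto intro: ideal_prod.intros simp: sigma.zero sigma.diff)
  then show ?case by simp
qed simp

lemma delta_ideal_pow: "x \<in> ideal_pow M n \<Longrightarrow> \<delta> x \<in> ideal_pow M (Suc n)"
proof (induction n arbitrary: x)
  case 0
  then show ?case using delta_range ideal_pow_one by auto
next
  case (Suc n)
  from Suc.prems have "x \<in> ideal_prod M (ideal_pow M n)" by simp
  then have "\<delta> x \<in> ideal_prod M (ideal_pow M (Suc n))"
  proof (induction rule: ideal_prod.induct)
    case (prod u v)
    have "\<delta> u * v \<in> ideal_pow M (2 + n)"
      using ideal_pow_mult[of "\<delta> u" 2 v n] delta_ideal prod by auto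
    moreover have "\<sigma> u * \<delta> v \<in> ideal_prod M (ideal_pow M (Suc n))"
      using ideal_prod.prod[of "\<sigma> u" M "\<delta> v"] sigma_ideal Suc.IH prod by auto
    ultimately show ?case
      using ideal_pow_add[of "\<delta> u * v" "Suc (Suc n)" "\<sigma> u * \<delta> v"]
      by (simp add: delta_mult numeral_2_eq_2)
  qed (auto intro: ideal_prod.intros simp: delta.zero delta.diff)
  then show ?case by simp
qed

lemma skew_coeff_ideal_pow: "x \<in> ideal_pow M n \<Longrightarrow> K i l x \<in> ideal_pow M (n + i - l)"
proof (induction i arbitrary: l)
  case 0
  then show ?case by (auto simp: ideal_pow_zero)
next
  case (Suc i)
  have "(if l = 0 then 0 else \<sigma> (K i (l - 1) x)) \<in> ideal_pow M (n + Suc i - l)"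
    using sigma_ideal_pow[OF Suc.IH[OF Suc.prems, of "l - 1"]]
    by (cases l) (auto intro: ideal_prod.zero)
  moreover have "\<delta> (K i l x) \<in> ideal_pow M (n + Suc i - l)"
    using delta_ideal_pow[OF Suc.IH[OF Suc.prems, of l]] by (rule ideal_pow_le) arith
  ultimately show ?case using ideal_pow_add by simp
qed

lemma skew_coeff_preserves_ideal_pow: "x \<in> ideal_pow M n \<Longrightarrow> K i l x \<in> ideal_pow M n"
  by (cases "l \<le> i")
    (auto simp: skew_coeff_eq_0_if_less ideal_pow_zero intro: ideal_pow_le[OF skew_coeff_ideal_pow])

abbreviation skew_times :: "(nat \<Rightarrow> 'a) \<Rightarrow> (nat \<Rightarrow> 'a) \<Rightarrow> nat \<Rightarrow> 'a" (infixl \<open>\<star>\<close> 70) where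
  "f \<star> g \<equiv> skew_mult \<sigma> \<delta> M f g"

definition mult_term :: "(nat \<Rightarrow> 'a) \<Rightarrow> (nat \<Rightarrow> 'a) \<Rightarrow> nat \<Rightarrow> nat \<Rightarrow> 'a" where
  "mult_term f g k i = (\<Sum>j\<le>k. f i * K i (k - j) (g j))"

lemma mult_term_ideal_pow: "mult_term f g k i \<in> ideal_pow M (i - k)"
  unfolding mult_term_def
proof (rule ideal_pow_sum)
  fix j assume "j \<in> {..k}"
  then have "K i (k - j) (g j) \<in> ideal_pow M (i - k)"
    using skew_coeff_ideal_pow[of "g j" 0 i "k - j"] by (auto elim!: ideal_pow_le)
  then show "f i * K i (k - j) (g j) \<in> ideal_pow M (i - k)" by (rule ideal_pow_left)
qed simp

lemma mult_term_summable: "adic_summable (mult_term f g k)"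
  by (rule adic_summable_weighted[of _ "\<lambda>i. i - k"]) (auto intro: mult_term_ideal_pow finite_nat_diff_less)

lemma skew_mult_eq_adic_sum: "(f \<star> g) k = adic_sum (mult_term f g k)"
proof -
  have "(\<lambda>N. \<Sum>j\<le>k. \<Sum>i<N. f i * K i (k - j) (g j)) = (\<lambda>N. sum (mult_term f g k) {..<N})"
    unfolding mult_term_def by (rule ext) (rule sum.swap)
  then show ?thesis
    unfolding skew_mult_def using adic_lim_partial_sums[OF mult_term_summable] by simp
qed

definition in_filtration :: "nat \<Rightarrow> (nat \<Rightarrow> 'a) \<Rightarrow> bool" where
  "in_filtration w f \<longleftrightarrow> (\<forall>i. f i \<in> ideal_pow M (w - i))"

definition monomial :: "nat \<Rightarrow> 'a \<Rightarrow> nat \<Rightarrow> 'a" where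
  "monomial n x = (\<lambda>k. if k = n then x else 0)"

definition series_sum :: "(nat \<Rightarrow> nat \<Rightarrow> 'a) \<Rightarrow> nat \<Rightarrow> 'a" where
  "series_sum p = (\<lambda>k. adic_sum (\<lambda>n. p n k))"

lemma in_filtration_0: "in_filtration 0 f"
  by (simp add: in_filtration_def)

lemma in_filtration_monomial: "in_filtration n (monomial n x)"
  by (simp add: in_filtration_def monomial_def ideal_pow_zero)

lemma in_filtration_mult:
  assumes f: "in_filtration a f" and g: "in_filtration b g"
  shows "in_filtration (a + b) (f \<star> g)"
  unfolding in_filtration_def
proof
  fix k
  have "mult_term f g k i \<in> ideal_pow M (a + b - k)" for i
    unfolding mult_term_def
  proof (rule ideal_pow_sum)
    fix j assume j: "j \<in> {..k}"
    have "f i \<in> ideal_pow M (a - i)" using f by (simp add: in_filtration_def)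
    moreover have "K i (k - j) (g j) \<in> ideal_pow M ((b - j) + i - (k - j))"
      using g by (intro skew_coeff_ideal_pow) (simp add: in_filtration_def)
    ultimately have "f i * K i (k - j) (g j) \<in> ideal_pow M ((a - i) + ((b - j) + i - (k - j)))"
      by (rule ideal_pow_mult)
    then show "f i * K i (k - j) (g j) \<in> ideal_pow M (a + b - k)"
      by (rule ideal_pow_le) (use j in auto)
  qed simp
  then show "(f \<star> g) k \<in> ideal_pow M (a + b - k)"
    unfolding skew_mult_eq_adic_sum by (intro adic_sum_in_ideal_pow mult_term_summable)
qed

lemma in_filtration_summable: "(\<And>n. in_filtration n (p n)) \<Longrightarrow> adic_summable (\<lambda>n. p n k)"
  by (rule adic_summable_weighted[of _ "\<lambda>n. n - k"]) (auto simp: in_filtration_def intro: finite_nat_diff_less)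

lemma series_sum_monomials: "series_sum (\<lambda>n. monomial n (f n)) = f"
proof
  fix k
  have "(\<lambda>n. monomial n (f n) k) = (\<lambda>n. if n = k then f k else 0)"
    by (auto simp: monomial_def)
  then show "series_sum (\<lambda>n. monomial n (f n)) k = f k"
    by (simp add: series_sum_def adic_sum_single)
qed

lemma skew_mult_coeff_series_sum:
  assumes terms: "\<And>i. mult_term f g k i = adic_sum (\<lambda>n. mult_term (p n) (q n) k i)"
    and bound: "\<And>i n. mult_term (p n) (q n) k i \<in> ideal_pow M (w i n)"
    and finite: "\<And>N. finite {(i, n). w i n < N}"
  shows "(f \<star> g) k = series_sum (\<lambda>n. p n \<star> q n) k"
proof -
  let ?T = "\<lambda>i n. mult_term (p n) (q n) k i"
  have "adic_summable (\<lambda>x. ?T (fst x) (snd x))"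
    using bound finite by (intro adic_summable_weighted[of _ "\<lambda>x. w (fst x) (snd x)"])
      (simp_all add: case_prod_unfold)
  then have "adic_sum (\<lambda>i. adic_sum (\<lambda>n. ?T i n)) = adic_sum (\<lambda>n. adic_sum (\<lambda>i. ?T i n))"
    by (rule adic_sum_swap)
  then show ?thesis
    by (simp add: skew_mult_eq_adic_sum terms[abs_def] series_sum_def)
qed

lemma skew_mult_series_sum_left:
  assumes p: "\<And>n. in_filtration n (p n)"
  shows "series_sum p \<star> g = series_sum (\<lambda>n. p n \<star> g)"
proof
  fix k
  have column: "adic_summable (\<lambda>n. p n i)" for i
    by (rule in_filtration_summable[OF p])
  have terms: "mult_term (series_sum p) g k i = adic_sum (\<lambda>n. mult_term (p n) g k i)" for i
  proof -
    have "mult_term (series_sum p) g k i = (\<Sum>j\<le>k. adic_sum (\<lambda>n. p n i * K i (k - j) (g j)))"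
      unfolding mult_term_def series_sum_def using adic_sum_mult_right[OF column] by simp
    also have "\<dots> = adic_sum (\<lambda>n. \<Sum>j\<le>k. p n i * K i (k - j) (g j))"
      using adic_sum_sum[of "{..k}" "\<lambda>j n. p n i * K i (k - j) (g j)"] adic_sum_mult_right[OF column]
      by simp
    finally show ?thesis by (simp add: mult_term_def)
  qed
  have bound: "mult_term (p n) g k i \<in> ideal_pow M (max i n - k)" for i n
    unfolding mult_term_def
  proof (rule ideal_pow_sum)
    fix j assume j: "j \<in> {..k}"
    have "p n i \<in> ideal_pow M (n - i)" using p by (simp add: in_filtration_def)
    moreover have "K i (k - j) (g j) \<in> ideal_pow M (0 + i - (k - j))"
      by (rule skew_coeff_ideal_pow) simp
    ultimately have "p n i * K i (k - j) (g j) \<in> ideal_pow M ((n - i) + (0 + i - (k - j)))"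
      by (rule ideal_pow_mult)
    then show "p n i * K i (k - j) (g j) \<in> ideal_pow M (max i n - k)"
      by (rule ideal_pow_le) (use j in auto)
  qed simp
  have "finite {(i, n). max i n - k < N}" for N
    by (rule finite_subset[of _ "{..<N + k} \<times> {..<N + k}"]) auto
  with terms bound show "(series_sum p \<star> g) k = series_sum (\<lambda>n. p n \<star> g) k"
    by (rule skew_mult_coeff_series_sum)
qed

lemma skew_mult_series_sum_right:
  assumes p: "\<And>n. in_filtration n (p n)"
  shows "f \<star> series_sum p = series_sum (\<lambda>n. f \<star> p n)"
proof
  fix k
  have column: "adic_summable (\<lambda>n. p n j)" for j
    by (rule in_filtration_summable[OF p])
  have "additive (\<lambda>x. f i * K i l x)" for i l
    using skew_coeff_additive[of i l] by (simp add: additive_def distrib_left)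
  then have coeff: "adic_summable (\<lambda>n. f i * K i l (p n j))"
    "adic_sum (\<lambda>n. f i * K i l (p n j)) = f i * K i l (adic_sum (\<lambda>n. p n j))" for i l j
    using adic_sum_additive[OF column, where \<phi> = "\<lambda>x. f i * K i l x"]
      skew_coeff_preserves_ideal_pow ideal_pow_left by auto
  have terms: "mult_term f (series_sum p) k i = adic_sum (\<lambda>n. mult_term f (p n) k i)" for i
  proof -
    have "mult_term f (series_sum p) k i = (\<Sum>j\<le>k. adic_sum (\<lambda>n. f i * K i (k - j) (p n j)))"
      unfolding mult_term_def series_sum_def using coeff by simp
    also have "\<dots> = adic_sum (\<lambda>n. \<Sum>j\<le>k. f i * K i (k - j) (p n j))"
      using adic_sum_sum[of "{..k}" "\<lambda>j n. f i * K i (k - j) (p n j)"] coeff by simp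
    finally show ?thesis by (simp add: mult_term_def)
  qed
  have bound: "mult_term f (p n) k i \<in> ideal_pow M (i + n - 2 * k)" for i n
    unfolding mult_term_def
  proof (rule ideal_pow_sum)
    fix j assume j: "j \<in> {..k}"
    have "K i (k - j) (p n j) \<in> ideal_pow M ((n - j) + i - (k - j))"
      using p by (intro skew_coeff_ideal_pow) (simp add: in_filtration_def)
    then have "f i * K i (k - j) (p n j) \<in> ideal_pow M ((n - j) + i - (k - j))"
      by (rule ideal_pow_left)
    then show "f i * K i (k - j) (p n j) \<in> ideal_pow M (i + n - 2 * k)"
      by (rule ideal_pow_le) (use j in auto)
  qed simp
  have "finite {(i, n). i + n - 2 * k < N}" for N
    by (rule finite_subset[of _ "{..<N + 2 * k} \<times> {..<N + 2 * k}"]) auto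
  with terms bound show "(f \<star> series_sum p) k = series_sum (\<lambda>n. f \<star> p n) k"
    by (rule skew_mult_coeff_series_sum)
qed

lemma skew_mult_monomial_left: "(monomial i a \<star> g) k = (\<Sum>j\<le>k. a * K i (k - j) (g j))"
proof -
  have "mult_term (monomial i a) g k = (\<lambda>i'. if i' = i then (\<Sum>j\<le>k. a * K i (k - j) (g j)) else 0)"
    by (auto simp: mult_term_def monomial_def)
  then show ?thesis by (simp add: skew_mult_eq_adic_sum adic_sum_single)
qed

lemma skew_mult_monomial_right:
  "(f \<star> monomial l c) k = (if l \<le> k then adic_sum (\<lambda>i. f i * K i (k - l) c) else 0)"
proof -
  have "mult_term f (monomial l c) k i = (\<Sum>j\<le>k. if j = l then f i * K i (k - l) c else 0)" for i
    unfolding mult_term_def monomial_def by (rule sum.cong) (auto simp: skew_coeff_zero)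
  then have "mult_term f (monomial l c) k = (\<lambda>i. if l \<le> k then f i * K i (k - l) c else 0)"
    by (auto simp: sum.delta)
  then show ?thesis
    using adic_sum_finite_support(2)[of "{}" "\<lambda>i::nat. 0"] by (simp add: skew_mult_eq_adic_sum)
qed

lemma skew_mult_monomials:
  "monomial i a \<star> monomial j b = (\<lambda>k. if j \<le> k then a * K i (k - j) b else 0)"
proof
  fix k
  have "(monomial i a \<star> monomial j b) k = (\<Sum>j'\<le>k. if j' = j then a * K i (k - j) b else 0)"
    unfolding skew_mult_monomial_left by (rule sum.cong) (auto simp: monomial_def skew_coeff_zero)
  then show "(monomial i a \<star> monomial j b) k = (if j \<le> k then a * K i (k - j) b else 0)"
    by (simp add: sum.delta)
qed

lemma skew_mult_const_left: "monomial 0 u \<star> g = (\<lambda>k. u * g k)"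
proof
  fix k
  have "(monomial 0 u \<star> g) k = (\<Sum>j\<le>k. if j = k then u * g j else 0)"
    unfolding skew_mult_monomial_left by (rule sum.cong) auto
  then show "(monomial 0 u \<star> g) k = u * g k" by (simp add: sum.delta)
qed

lemma skew_one_eq_monomial: "skew_one = monomial 0 1"
  by (auto simp: skew_one_def monomial_def)

lemma skew_mult_one_left: "skew_one \<star> g = g"
  by (simp add: skew_one_eq_monomial skew_mult_const_left)

lemma skew_mult_one_right: "f \<star> skew_one = f"
proof
  fix k
  have "(\<lambda>i. f i * K i k 1) = (\<lambda>i. if i = k then f k else 0)"
    by (auto simp: skew_coeff_one)
  then show "(f \<star> skew_one) k = f k"
    unfolding skew_one_eq_monomial skew_mult_monomial_right by (simp add: adic_sum_single)
qed

lemma skew_mult_monomials_monomial: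
  "((monomial i a \<star> monomial j b) \<star> monomial l c) (l + s)
    = (\<Sum>t\<le>i. \<Sum>u\<le>s. a * K i t b * K t (s - u) (K j u c))"
proof -
  let ?q = "\<lambda>i'. (if j \<le> i' then a * K i (i' - j) b else 0) * K i' s c"
  have "?q i' = 0" if "i' \<notin> (\<lambda>t. t + j) ` {..i}" for i'
  proof (cases "j \<le> i'")
    case True
    then have "i' = (i' - j) + j" by simp
    then have "\<not> i' - j \<le> i" using that by (metis atMost_iff imageI)
    then show ?thesis using True by (simp add: skew_coeff_eq_0_if_less)
  qed simp
  then have "adic_sum ?q = sum ?q ((\<lambda>t. t + j) ` {..i})"
    by (intro adic_sum_finite_support(2)) auto
  also have "\<dots> = (\<Sum>t\<le>i. a * K i t b * K (t + j) s c)"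
    by (simp add: sum.reindex inj_on_def)
  also have "\<dots> = (\<Sum>t\<le>i. \<Sum>u\<le>s. a * K i t b * K t (s - u) (K j u c))"
    by (simp add: skew_coeff_add_exp sum_distrib_left)
  finally show ?thesis
    by (simp add: skew_mult_monomial_right skew_mult_monomials)
qed

lemma skew_mult_monomial_monomials:
  "(monomial i a \<star> (monomial j b \<star> monomial l c)) (l + s)
    = (\<Sum>t\<le>i. \<Sum>u\<le>s. a * K i t b * K t (s - u) (K j u c))"
proof -
  have "(monomial i a \<star> (monomial j b \<star> monomial l c)) (l + s)
      = (\<Sum>k'\<le>l + s. a * K i (l + s - k') (if l \<le> k' then b * K j (k' - l) c else 0))"
    unfolding skew_mult_monomial_left skew_mult_monomials ..
  also have "\<dots> = (\<Sum>u\<le>s. a * K i (s - u) (b * K j u c))"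
    by (subst sum_atMost_shift_lower) (auto simp: skew_coeff_zero)
  also have "\<dots> = (\<Sum>t\<le>i. \<Sum>u\<le>s. a * K i t b * K t (s - u) (K j u c))"
    by (simp add: skew_coeff_mult sum_distrib_left mult.assoc sum.swap[of _ "{..s}"])
  finally show ?thesis .
qed

lemma skew_mult_assoc_monomials:
  "(monomial i a \<star> monomial j b) \<star> monomial l c = monomial i a \<star> (monomial j b \<star> monomial l c)"
proof
  fix k
  show "((monomial i a \<star> monomial j b) \<star> monomial l c) k = (monomial i a \<star> (monomial j b \<star> monomial l c)) k"
  proof (cases "l \<le> k")
    case True
    then obtain s where "k = l + s" by (auto dest: le_Suc_ex)
    then show ?thesis by (simp only: skew_mult_monomials_monomial skew_mult_monomial_monomials)
  next
    case False
    have "(monomial i a \<star> (monomial j b \<star> monomial l c)) k = (\<Sum>k'\<le>k. a * K i (k - k') 0)"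
      unfolding skew_mult_monomial_left skew_mult_monomials by (rule sum.cong) (use False in auto)
    then show ?thesis using False by (simp add: skew_mult_monomial_right skew_coeff_zero)
  qed
qed

lemma in_filtration_mult_monomial_left: "in_filtration m (monomial m x \<star> g)"
  using in_filtration_mult[OF in_filtration_monomial in_filtration_0] by simp

lemma in_filtration_mult_monomial_right: "in_filtration m (g \<star> monomial m x)"
  using in_filtration_mult[OF in_filtration_0 in_filtration_monomial] by simp

lemma skew_mult_assoc_monomial_monomial:
  "(monomial i a \<star> monomial j b) \<star> h = monomial i a \<star> (monomial j b \<star> h)"
proof -
  let ?p = "\<lambda>l. monomial l (h l)"
  have "(monomial i a \<star> monomial j b) \<star> series_sum ?p
      = series_sum (\<lambda>l. (monomial i a \<star> monomial j b) \<star> ?p l)"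
    by (rule skew_mult_series_sum_right) (rule in_filtration_monomial)
  also have "\<dots> = series_sum (\<lambda>l. monomial i a \<star> (monomial j b \<star> ?p l))"
    by (simp add: skew_mult_assoc_monomials)
  also have "\<dots> = monomial i a \<star> (monomial j b \<star> series_sum ?p)"
    by (simp add: skew_mult_series_sum_right in_filtration_monomial in_filtration_mult_monomial_right)
  finally show ?thesis by (simp add: series_sum_monomials)
qed

lemma skew_mult_assoc_monomial:
  "(monomial i a \<star> g) \<star> h = monomial i a \<star> (g \<star> h)"
proof -
  let ?p = "\<lambda>m. monomial m (g m)"
  have "(monomial i a \<star> series_sum ?p) \<star> h = series_sum (\<lambda>m. (monomial i a \<star> ?p m) \<star> h)"
    by (simp add: skew_mult_series_sum_right skew_mult_series_sum_left
        in_filtration_monomial in_filtration_mult_monomial_right)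
  also have "\<dots> = series_sum (\<lambda>m. monomial i a \<star> (?p m \<star> h))"
    by (simp add: skew_mult_assoc_monomial_monomial)
  also have "\<dots> = monomial i a \<star> (series_sum ?p \<star> h)"
    by (simp add: skew_mult_series_sum_right skew_mult_series_sum_left
        in_filtration_monomial in_filtration_mult_monomial_left)
  finally show ?thesis by (simp add: series_sum_monomials)
qed

lemma skew_mult_assoc: "(f \<star> g) \<star> h = f \<star> (g \<star> h)"
proof -
  let ?p = "\<lambda>n. monomial n (f n)"
  have "(series_sum ?p \<star> g) \<star> h = series_sum (\<lambda>n. (?p n \<star> g) \<star> h)"
    by (simp add: skew_mult_series_sum_left in_filtration_monomial in_filtration_mult_monomial_left)
  also have "\<dots> = series_sum (\<lambda>n. ?p n \<star> (g \<star> h))"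
    by (simp add: skew_mult_assoc_monomial)
  also have "\<dots> = series_sum ?p \<star> (g \<star> h)"
    by (simp add: skew_mult_series_sum_left in_filtration_monomial)
  finally show ?thesis by (simp add: series_sum_monomials)
qed

lemma skew_mult_diff_left: "(\<lambda>k. a k - b k) \<star> g = (\<lambda>k. (a \<star> g) k - (b \<star> g) k)"
proof
  fix k
  have "mult_term (\<lambda>k. a k - b k) g k = (\<lambda>i. mult_term a g k i - mult_term b g k i)"
    by (auto simp: mult_term_def left_diff_distrib sum_subtractf)
  then show "((\<lambda>k. a k - b k) \<star> g) k = (a \<star> g) k - (b \<star> g) k"
    by (simp add: skew_mult_eq_adic_sum adic_sum_diff mult_term_summable)
qed

lemma skew_mult_diff_right: "f \<star> (\<lambda>k. a k - b k) = (\<lambda>k. (f \<star> a) k - (f \<star> b) k)"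
proof
  fix k
  have "mult_term f (\<lambda>k. a k - b k) k = (\<lambda>i. mult_term f a k i - mult_term f b k i)"
    by (auto simp: mult_term_def skew_coeff_diff right_diff_distrib sum_subtractf)
  then show "(f \<star> (\<lambda>k. a k - b k)) k = (f \<star> a) k - (f \<star> b) k"
    by (simp add: skew_mult_eq_adic_sum adic_sum_diff mult_term_summable)
qed

primrec series_pow :: "(nat \<Rightarrow> 'a) \<Rightarrow> nat \<Rightarrow> nat \<Rightarrow> 'a" where
  "series_pow h 0 = skew_one"
| "series_pow h (Suc n) = h \<star> series_pow h n"

lemma in_filtration_series_pow: "in_filtration 1 h \<Longrightarrow> in_filtration n (series_pow h n)"
  by (induction n) (simp_all add: in_filtration_0 in_filtration_mult[of 1 h, simplified])

lemma series_pow_Suc2: "series_pow h n \<star> h = series_pow h (Suc n)"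
  by (induction n) (simp_all add: skew_mult_one_left skew_mult_one_right skew_mult_assoc)

lemma geometric_series:
  assumes h: "in_filtration 1 h"
  shows "(\<lambda>k. skew_one k - h k) \<star> series_sum (series_pow h) = skew_one"
    and "series_sum (series_pow h) \<star> (\<lambda>k. skew_one k - h k) = skew_one"
proof -
  have p: "\<And>n. in_filtration n (series_pow h n)"
    using in_filtration_series_pow[OF h] .
  have "series_sum (series_pow h) k = skew_one k + series_sum (\<lambda>n. series_pow h (Suc n)) k" for k
    unfolding series_sum_def using adic_sum_shift(2)[OF in_filtration_summable[OF p]] by simp
  moreover have "h \<star> series_sum (series_pow h) = series_sum (\<lambda>n. series_pow h (Suc n))"
    using skew_mult_series_sum_right[OF p, of h] by simp
  moreover have "series_sum (series_pow h) \<star> h = series_sum (\<lambda>n. series_pow h (Suc n))"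
    using skew_mult_series_sum_left[OF p, of h] by (simp add: series_pow_Suc2)
  ultimately show "(\<lambda>k. skew_one k - h k) \<star> series_sum (series_pow h) = skew_one"
    and "series_sum (series_pow h) \<star> (\<lambda>k. skew_one k - h k) = skew_one"
    by (simp_all add: skew_mult_diff_left skew_mult_diff_right skew_mult_one_left
        skew_mult_one_right fun_eq_iff)
qed

lemma unit_skew_one_minus:
  assumes "in_filtration 1 h"
  shows "unit_wrt (\<star>) skew_one (\<lambda>k. skew_one k - h k)"
  using geometric_series[OF assms] unfolding unit_wrt_def by blast

lemma unit_monomial_0:
  assumes "unit_wrt (*) 1 u"
  shows "unit_wrt (\<star>) skew_one (monomial 0 u)"
proof -
  obtain v where "u * v = 1" "v * u = 1" using assms unfolding unit_wrt_def by blast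
  then have "monomial 0 u \<star> monomial 0 v = skew_one" "monomial 0 v \<star> monomial 0 u = skew_one"
    unfolding skew_mult_const_left by (auto simp: monomial_def skew_one_def)
  then show ?thesis unfolding unit_wrt_def by blast
qed

lemma unit_if_constant_term_unit:
  assumes "unit_wrt (*) 1 (f 0)"
  shows "unit_wrt (\<star>) skew_one f"
proof -
  obtain u where u: "f 0 * u = 1" "u * f 0 = 1"
    using assms unfolding unit_wrt_def by blast
  define h where "h = (\<lambda>k. skew_one k - u * f k)"
  have "in_filtration 1 h"
    unfolding in_filtration_def
    by (auto simp: h_def skew_one_def u ideal_prod.zero less_Suc_eq_0_disj)
  then have "unit_wrt (\<star>) skew_one (\<lambda>k. u * f k)"
    using unit_skew_one_minus[of h] by (simp add: h_def)
  moreover have "f = monomial 0 (f 0) \<star> (\<lambda>k. u * f k)"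
    by (simp add: skew_mult_const_left mult.assoc[symmetric] u)
  ultimately show ?thesis
    using unit_wrt_mult[OF skew_mult_assoc skew_mult_one_left skew_mult_one_right]
      unit_monomial_0[OF assms] by metis
qed

lemma skew_mult_coeff_0: "(f \<star> g) 0 - f 0 * g 0 \<in> M"
proof -
  have summable: "adic_summable (mult_term f g 0)" by (rule mult_term_summable)
  then have "(f \<star> g) 0 = f 0 * g 0 + adic_sum (\<lambda>n. mult_term f g 0 (Suc n))"
    using adic_sum_shift(2) by (simp add: skew_mult_eq_adic_sum mult_term_def)
  moreover have "adic_sum (\<lambda>n. mult_term f g 0 (Suc n)) \<in> ideal_pow M 1"
  proof (rule adic_sum_in_ideal_pow[OF adic_sum_shift(1)[OF summable]])
    fix n show "mult_term f g 0 (Suc n) \<in> ideal_pow M 1"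
      using mult_term_ideal_pow[of f g 0 "Suc n"] by (rule ideal_pow_le) simp
  qed
  ultimately show ?thesis using ideal_pow_one by simp
qed

context
  assumes M_eq_nonunits: "M = nonunits"
begin

lemma not_in_ideal_iff_unit: "x \<notin> M \<longleftrightarrow> unit_wrt (*) 1 x"
  unfolding M_eq_nonunits nonunits_def by simp

lemma skew_unit_iff: "unit_wrt (\<star>) skew_one f \<longleftrightarrow> unit_wrt (*) 1 (f 0)"
proof
  assume "unit_wrt (\<star>) skew_one f"
  then obtain g where "f \<star> g = skew_one"
    unfolding unit_wrt_def by blast
  then have "1 - f 0 * g 0 \<in> M" using skew_mult_coeff_0[of f g] by (simp add: skew_one_def)
  moreover have "1 \<notin> M" using not_in_ideal_iff_unit unfolding unit_wrt_def by auto
  ultimately have "f 0 * g 0 \<notin> M" using ideal_add by fastforce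
  then show "unit_wrt (*) 1 (f 0)" using ideal_right not_in_ideal_iff_unit by blast
qed (rule unit_if_constant_term_unit)

lemma skew_local_ring: "local_ring_wrt skew_add skew_neg (\<lambda>_. 0) (\<star>) skew_one"
proof -
  have nonunits: "{f. \<not> unit_wrt (\<star>) skew_one f} = {f. f 0 \<in> M}"
    using skew_unit_iff not_in_ideal_iff_unit by blast
  have "(f \<star> g) 0 \<in> M" if "f 0 \<in> M \<or> g 0 \<in> M" for f g
  proof -
    have "f 0 * g 0 \<in> M" using that ideal_left ideal_right by blast
    from ideal_add[OF skew_mult_coeff_0[of f g] this] show ?thesis by simp
  qed
  moreover have "skew_one 0 \<notin> M"
    using not_in_ideal_iff_unit by (simp add: skew_one_def unit_wrt_def)
  ultimately show ?thesis
    unfolding local_ring_wrt_def two_sided_ideal_wrt_def nonunits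
    by (auto simp: skew_add_def skew_neg_def ideal_zero ideal_add ideal_neg)
qed

end

end

theorem mainTheorem7:
  fixes \<sigma> \<delta> :: "'a::ring_1 \<Rightarrow> 'a"
  assumes local: "local_ring_wrt (+) uminus 0 (*) (1::'a)"
    and complete: "adic_complete (nonunits :: 'a set)"
    and separated: "adic_separated (nonunits :: 'a set)"
    and endo: "ring_endo \<sigma>"
    and sigma_m: "\<sigma> ` nonunits \<subseteq> nonunits"
    and deriv: "sigma_derivation \<sigma> \<delta>"
    and delta_R: "range \<delta> \<subseteq> nonunits"
    and delta_m: "\<delta> ` nonunits \<subseteq> ideal_pow nonunits 2"
  shows "(\<forall>f :: nat \<Rightarrow> 'a. unit_wrt (skew_mult \<sigma> \<delta> nonunits) skew_one f \<longleftrightarrow> unit_wrt (*) 1 (f 0))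
         \<and> local_ring_wrt skew_add skew_neg (\<lambda>_. 0) (skew_mult \<sigma> \<delta> nonunits) skew_one"
proof -
  have "two_sided_ideal_wrt (+) uminus 0 (*) (nonunits :: 'a set)"
    using local unfolding local_ring_wrt_def nonunits_def by simp
  then interpret skew_power_series nonunits \<sigma> \<delta>
    using assms by unfold_locales
  show ?thesis using skew_unit_iff skew_local_ring by blast
qed

end
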